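(* Let $G^{\mathcal X}_r=(V_r,E^{\mathcal X}_r,s_r)$ be an extraction order and $l\in V_r$. Then $\mathcal L_e=\mathcal L_{e'}$ for every pair of incoming edges $e,e'\in E^{\mathcal X}_r$ of $l$.
   Context: An extraction order of a directed graph $G_r=(V_r,E_r)$ is a rooted directed acyclic graph $G^{\mathcal X}_r=(V_r,E^{\mathcal X}_r,s_r)$ in which every node is reachable from $s_r$ and $E^{\mathcal X}_r$ is obtained from $E_r$ by reversing some (possibly no) edges. A confluence from $i$ to $j$ is a pair of directed paths in $E^{\mathcal X}_r$ from $i$ to $j$ sharing no node other than $i$ and $j$. For $e\in E^{\mathcal X}_r$, the label set $\mathcal L_e\subseteq V_r$ is the set of nodes $j$ such that $e$ belongs to some confluence with target $j$. *)

theory Defs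
  imports Main
begin

definition dpath :: "('v \<times> 'v) set \<Rightarrow> 'v list \<Rightarrow> 'v \<Rightarrow> 'v \<Rightarrow> bool" where
  "dpath Ed p i j \<longleftrightarrow> p \<noteq> [] \<and> hd p = i \<and> last p = j \<and>
     (\<forall>k. Suc k < length p \<longrightarrow> (p ! k, p ! Suc k) \<in> Ed)"

definition path_edges :: "'v list \<Rightarrow> ('v \<times> 'v) set" where
  "path_edges p = {(p ! k, p ! Suc k) | k. Suc k < length p}"

definition extraction_order ::
  "'v set \<Rightarrow> ('v \<times> 'v) set \<Rightarrow> ('v \<times> 'v) set \<Rightarrow> 'v \<Rightarrow> bool" where
  "extraction_order V E EXo s \<longleftrightarrow>
     E \<subseteq> V \<times> V \<and> s \<in> V \<and>
     (\<exists>R \<subseteq> E. EXo = (E - R) \<union> R\<inverse>) \<and>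
     acyclic EXo \<and>
     (\<forall>v\<in>V. (s, v) \<in> EXo\<^sup>*)"

definition confluence :: "('v \<times> 'v) set \<Rightarrow> 'v \<Rightarrow> 'v \<Rightarrow> 'v list \<Rightarrow> 'v list \<Rightarrow> bool" where
  "confluence EXo i j p1 p2 \<longleftrightarrow>
     dpath EXo p1 i j \<and> dpath EXo p2 i j \<and> p1 \<noteq> p2 \<and> set p1 \<inter> set p2 \<subseteq> {i, j}"

definition label_set :: "'v set \<Rightarrow> ('v \<times> 'v) set \<Rightarrow> 'v \<times> 'v \<Rightarrow> 'v set" where
  "label_set V EXo e = {j \<in> V. \<exists>i p1 p2. confluence EXo i j p1 p2 \<and>
                                  e \<in> path_edges p1 \<union> path_edges p2}"

end

theory Submission
  imports Defs
begin

text \<open>Let a confluence to j use the edge (a, l) on its path p1, and let P be the part of p1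
  from l to j. By acyclicity no vertex of P reaches a, so the root path to the start of the
  confluence followed by the other path p2 reaches j meeting P only in j and without passing
  through l (if j = l, take instead a root path to a followed by l). Call a vertex good if it has
  such a path to j avoiding P except at j and avoiding the edge (b, l). On a root path to b let y be
  the last good vertex. Then the path from y to b, continued by (b, l) and P, and the good path from
  y form a confluence to j through (b, l): a common vertex other than y and j would lie on the
  good path, hence be good, and come after y.\<close>

lemma dpath_Nil [simp]: "\<not> dpath E [] x y"
  by (simp add: dpath_def)

lemma dpath_singleton [simp]: "dpath E [u] x y \<longleftrightarrow> u = x \<and> u = y"
  by (auto simp: dpath_def)

lemma dpath_Cons_Cons [simp]:
  "dpath E (u # w # r) x y \<longleftrightarrow> u = x \<and> (u, w) \<in> E \<and> dpath E (w # r) w y"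
  by (auto simp: dpath_def less_Suc_eq_0_disj)

lemma dpath_hd: "dpath E p x y \<Longrightarrow> p = x # tl p"
  by (cases p) (auto simp: dpath_def)

lemma path_edges_zip: "path_edges p = set (zip p (tl p))"
  by (auto simp: path_edges_def set_zip nth_tl)

lemma path_edges_singleton [simp]: "path_edges [u] = {}"
  by (simp add: path_edges_def)

lemma path_edges_Cons_Cons [simp]: "path_edges (u # w # r) = insert (u, w) (path_edges (w # r))"
  by (simp add: path_edges_zip)

lemma path_edges_subset: "path_edges p \<subseteq> set p \<times> set p"
  by (auto simp: path_edges_def)

lemma dpath_path_edges: "dpath E p x y \<Longrightarrow> path_edges p \<subseteq> E"
  by (auto simp: dpath_def path_edges_def)

lemma path_edges_append:
  "p \<noteq> [] \<Longrightarrow> q \<noteq> [] \<Longrightarrow>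
     path_edges (p @ q) = path_edges p \<union> insert (last p, hd q) (path_edges q)"
proof (induction p)
  case (Cons u p)
  then show ?case
    by (cases p; cases q) auto
qed simp

lemma dpath_append:
  "dpath E p x y \<Longrightarrow> (y, y') \<in> E \<Longrightarrow> dpath E q y' z \<Longrightarrow> dpath E (p @ q) x z"
proof (induction p arbitrary: x)
  case (Cons u p)
  then show ?case
    by (cases p; cases q) (auto dest: dpath_hd)
qed simp

lemma dpath_glue: "dpath E p x y \<Longrightarrow> dpath E q y z \<Longrightarrow> dpath E (p @ tl q) x z"
  by (cases q rule: remdups_adj.cases) (auto intro: dpath_append)

lemma dpath_rtrancl: "dpath E p x y \<Longrightarrow> v \<in> set p \<Longrightarrow> (x, v) \<in> E\<^sup>* \<and> (v, y) \<in> E\<^sup>*"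
proof (induction p arbitrary: x v)
  case (Cons u p)
  show ?case
  proof (cases p)
    case (Cons w r)
    with Cons.prems have xw: "u = x" "(x, w) \<in> E" "dpath E p w y" by auto
    have "(w, y) \<in> E\<^sup>*"
      using Cons.IH[OF xw(3)] \<open>p = w # r\<close> by simp
    with xw Cons.prems Cons.IH[OF xw(3), of v] show ?thesis
      by (auto intro: converse_rtrancl_into_rtrancl)
  qed (use Cons.prems in auto)
qed simp

lemma rtrancl_imp_dpath: "(x, y) \<in> E\<^sup>* \<Longrightarrow> \<exists>p. dpath E p x y"
proof (induction rule: converse_rtrancl_induct)
  case base
  show ?case by (rule exI[of _ "[y]"]) simp
next
  case (step x z)
  then obtain p where "dpath E p z y" by blast
  with step.hyps(1) have "dpath E (x # p) x y"
    by (metis dpath_Cons_Cons dpath_hd)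
  then show ?case ..
qed

lemma dpath_suffix:
  "dpath E p x y \<Longrightarrow> v \<in> set p \<Longrightarrow>
     \<exists>q. dpath E q v y \<and> set q \<subseteq> set p \<and> path_edges q \<subseteq> path_edges p"
proof (induction p arbitrary: x)
  case (Cons u p)
  show ?case
  proof (cases "v = u")
    case False
    with Cons.prems obtain w r where "p = w # r" "v \<in> set p"
      by (cases p) auto
    with Cons.prems Cons.IH[of w] show ?thesis
      by fastforce
  qed (use Cons.prems in \<open>auto simp: dpath_def\<close>)
qed simp

lemma dpath_last_visit:
  "dpath E Q x z \<Longrightarrow> v \<in> set Q \<Longrightarrow> v \<in> K \<Longrightarrow>
     \<exists>y U. dpath E U y z \<and> set U \<subseteq> set Q \<and> y \<in> K \<and> set (tl U) \<inter> K = {}"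
proof (induction Q arbitrary: x v)
  case (Cons u p)
  then have "u = x"
    by (simp add: dpath_def)
  show ?case
  proof (cases "set p \<inter> K = {}")
    case True
    with Cons.prems have "u \<in> K" by auto
    with True Cons.prems \<open>u = x\<close> show ?thesis
      by (intro exI[of _ u] exI[of _ "u # p"]) simp
  next
    case False
    then obtain v' where "v' \<in> set p" "v' \<in> K" by blast
    then obtain w r where "p = w # r" by (cases p) auto
    with Cons.prems have "dpath E p w z" by simp
    from Cons.IH[OF this \<open>v' \<in> set p\<close> \<open>v' \<in> K\<close>] show ?thesis
      by auto
  qed
qed simp

lemma acyclic_edge_no_return: "acyclic E \<Longrightarrow> (a, l) \<in> E \<Longrightarrow> (l, a) \<notin> E\<^sup>*"
  by (meson acyclic_def rtrancl_into_trancl1)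

lemma confluence_through_edge:
  assumes Q: "dpath E Q x b" and bl: "(b, l) \<in> E" and P: "dpath E P l j"
    and W: "dpath E W x j" "set W \<inter> set P \<subseteq> {j}" "(b, l) \<notin> path_edges W"
  shows "\<exists>y A W. confluence E y j A W \<and> (b, l) \<in> path_edges A"
proof -
  define good where
    "good = {v. \<exists>W. dpath E W v j \<and> set W \<inter> set P \<subseteq> {j} \<and> (b, l) \<notin> path_edges W}"
  have "x \<in> good"
    using W unfolding good_def by blast
  moreover have "x \<in> set Q"
    using dpath_hd[OF Q] by (metis list.set_intros(1))
  ultimately obtain y U where U: "dpath E U y b" "y \<in> good" "set (tl U) \<inter> good = {}"
    using dpath_last_visit[OF Q] by blast
  from \<open>y \<in> good\<close> obtain Wy where Wy: "dpath E Wy y j" "set Wy \<inter> set P \<subseteq> {j}"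
      "(b, l) \<notin> path_edges Wy"
    unfolding good_def by blast
  define A where "A = U @ P"
  have "U \<noteq> []" "last U = b" "P \<noteq> []" "hd P = l"
    using U(1) P unfolding dpath_def by auto
  then have A: "dpath E A y j" "(b, l) \<in> path_edges A"
    using dpath_append[OF U(1) bl P] path_edges_append[of U P] unfolding A_def by auto
  have "v \<in> {y, j}" if "v \<in> set A" "v \<in> set Wy" for v
  proof (cases "v \<in> set (tl U)")
    case True
    from dpath_suffix[OF Wy(1) \<open>v \<in> set Wy\<close>] Wy have "v \<in> good"
      unfolding good_def by blast
    with True U(3) show ?thesis by blast
  next
    case False
    with \<open>v \<in> set A\<close> dpath_hd[OF U(1)] have "v = y \<or> v \<in> set P"
      unfolding A_def by (metis Un_iff set_ConsD set_append)
    with \<open>v \<in> set Wy\<close> Wy(2) show ?thesis by blast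
  qed
  moreover have "A \<noteq> Wy"
    using A(2) Wy(3) by blast
  ultimately have "confluence E y j A Wy"
    using A(1) Wy(1) unfolding confluence_def by blast
  with A show ?thesis by blast
qed

lemma path_avoiding_edge_into:
  assumes "acyclic E" "(s, a) \<in> E\<^sup>*" "(a, l) \<in> E" "a \<noteq> b"
  shows "\<exists>W. dpath E W s l \<and> (b, l) \<notin> path_edges W"
proof -
  obtain S where S: "dpath E S s a"
    using rtrancl_imp_dpath[OF assms(2)] ..
  have "l \<notin> set S"
    using dpath_rtrancl[OF S, of l] acyclic_edge_no_return[OF assms(1,3)] by blast
  moreover have "path_edges (S @ [l]) = insert (a, l) (path_edges S)"
    using path_edges_append[of S "[l]"] S by (simp add: dpath_def)
  ultimately have "(b, l) \<notin> path_edges (S @ [l])"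
    using path_edges_subset[of S] assms(4) by auto
  moreover have "dpath E (S @ [l]) s l"
    using dpath_append[OF S assms(3)] by simp
  ultimately show ?thesis by blast
qed

lemma path_avoiding_confluence_tail:
  assumes "acyclic E" "(s, i) \<in> E\<^sup>*" and c: "confluence E i j p1 p2"
    and "(a, l) \<in> path_edges p1" and P: "dpath E P l j" "set P \<subseteq> set p1"
  shows "\<exists>W. dpath E W s j \<and> set W \<inter> set P \<subseteq> {j}"
proof -
  from c have p1: "dpath E p1 i j" and p2: "dpath E p2 i j"
    and disjoint: "set p1 \<inter> set p2 \<subseteq> {i, j}"
    unfolding confluence_def by auto
  have "(i, a) \<in> E\<^sup>*"
    using assms(4) path_edges_subset[of p1] dpath_rtrancl[OF p1] by blast
  obtain S where S: "dpath E S s i"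
    using rtrancl_imp_dpath[OF assms(2)] ..
  have "v = j" if "v \<in> set (S @ tl p2)" "v \<in> set P" for v
  proof (rule ccontr)
    assume "v \<noteq> j"
    have "(v, i) \<in> E\<^sup>*"
    proof (cases "v \<in> set S")
      case True
      then show ?thesis using dpath_rtrancl[OF S] by blast
    next
      case False
      with that p2 have "v \<in> set p2" by (auto simp: dpath_def dest: list.set_sel(2))
      with that P(2) disjoint \<open>v \<noteq> j\<close> show ?thesis by auto
    qed
    with \<open>(i, a) \<in> E\<^sup>*\<close> dpath_rtrancl[OF P(1) \<open>v \<in> set P\<close>] have "(l, a) \<in> E\<^sup>*"
      by (meson rtrancl_trans)
    with acyclic_edge_no_return[OF assms(1)] assms(4) dpath_path_edges[OF p1] show False
      by blast
  qed
  with dpath_glue[OF S p2] show ?thesis by blast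
qed

lemma confluence_transfer_incoming:
  assumes "acyclic E" "(s, i) \<in> E\<^sup>*" "(s, b) \<in> E\<^sup>*" and c: "confluence E i j p1 p2"
    and al: "(a, l) \<in> path_edges p1" and bl: "(b, l) \<in> E"
  shows "\<exists>y A W. confluence E y j A W \<and> (b, l) \<in> path_edges A"
proof (cases "a = b")
  case True
  with c al show ?thesis by blast
next
  case ab: False
  obtain Q where Q: "dpath E Q s b"
    using rtrancl_imp_dpath[OF assms(3)] ..
  from c have p1: "dpath E p1 i j"
    unfolding confluence_def by blast
  have "a \<in> set p1" "l \<in> set p1"
    using al path_edges_subset by blast+
  show ?thesis
  proof (cases "j = l")
    case True
    have "(s, a) \<in> E\<^sup>*"
      using assms(2) dpath_rtrancl[OF p1 \<open>a \<in> set p1\<close>] by (meson rtrancl_trans)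
    then obtain W where "dpath E W s l" "(b, l) \<notin> path_edges W"
      using path_avoiding_edge_into[OF assms(1) _ _ ab] dpath_path_edges[OF p1] al by blast
    with confluence_through_edge[OF Q bl, of "[l]"] True show ?thesis
      by simp
  next
    case False
    obtain P where P: "dpath E P l j" "set P \<subseteq> set p1"
      using dpath_suffix[OF p1 \<open>l \<in> set p1\<close>] by blast
    then obtain W where W: "dpath E W s j" "set W \<inter> set P \<subseteq> {j}"
      using path_avoiding_confluence_tail[OF assms(1,2) c al] by blast
    moreover have "l \<in> set P"
      using dpath_hd[OF P(1)] by (metis list.set_intros(1))
    ultimately have "(b, l) \<notin> path_edges W"
      using False path_edges_subset by blast
    with confluence_through_edge[OF Q bl P(1) W] show ?thesis .
  qed
qed

lemma confluence_sym: "confluence E i j p1 p2 \<longleftrightarrow> confluence E i j p2 p1"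
  unfolding confluence_def by blast

lemma label_set_incoming_subset:
  assumes eo: "extraction_order V E EXo s" and "(a, l) \<in> EXo" "(b, l) \<in> EXo"
  shows "label_set V EXo (a, l) \<subseteq> label_set V EXo (b, l)"
proof
  fix j
  assume "j \<in> label_set V EXo (a, l)"
  then obtain i p1 p2 where "j \<in> V" "confluence EXo i j p1 p2"
      "(a, l) \<in> path_edges p1 \<union> path_edges p2"
    unfolding label_set_def by blast
  then obtain q1 q2 where c: "confluence EXo i j q1 q2" and al: "(a, l) \<in> path_edges q1"
    by (metis Un_iff confluence_sym)
  from eo have acyc: "acyclic EXo" and sub: "EXo \<subseteq> V \<times> V"
    and reach: "\<And>v. v \<in> V \<Longrightarrow> (s, v) \<in> EXo\<^sup>*"
    unfolding extraction_order_def by auto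
  from c have q1: "dpath EXo q1 i j"
    unfolding confluence_def by blast
  have "a \<in> set q1"
    using al path_edges_subset by blast
  with q1 have "(i, a) \<in> EXo\<^sup>*"
    by (simp add: dpath_rtrancl)
  moreover have "a \<in> V"
    using \<open>(a, l) \<in> EXo\<close> sub by blast
  ultimately have "i \<in> V"
    using sub by (induction rule: converse_rtrancl_induct) auto
  moreover have "b \<in> V"
    using \<open>(b, l) \<in> EXo\<close> sub by blast
  ultimately have "\<exists>y A W. confluence EXo y j A W \<and> (b, l) \<in> path_edges A"
    using confluence_transfer_incoming[OF acyc _ _ c al \<open>(b, l) \<in> EXo\<close>] reach by blast
  with \<open>j \<in> V\<close> show "j \<in> label_set V EXo (b, l)"
    unfolding label_set_def by blast
qed

theorem lemma15:
  fixes V :: "'v set" and E EXo :: "('v \<times> 'v) set" and s l a b :: 'v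
  assumes "finite V"
    and "extraction_order V E EXo s"
    and "l \<in> V"
    and "(a, l) \<in> EXo" and "(b, l) \<in> EXo"
  shows "label_set V EXo (a, l) = label_set V EXo (b, l)"
  using label_set_incoming_subset[OF assms(2,4,5)] label_set_incoming_subset[OF assms(2,5,4)]
  by (rule equalityI)

end
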